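(* Let $V$ be a real vector space of odd finite dimension, $G\le\mathrm{GL}(V)$ a finite group such that $V$ is a non-trivial irreducible $\mathbb{R}G$-module and $-\mathrm{id}_V\notin G$, and let $n\in N_{\mathrm{GL}(V)}(G)$ have finite order. Let $\nu=\mathrm{ad}_n\in\mathrm{Aut}(G)$, $G'=\langle\mathrm{Inn}(G),\nu\rangle\le\mathrm{Aut}(G)$, and let $\chi'$ be the character of $G'$ defined below. Suppose there is $g\in G$ such that $\alpha:=\mathrm{ad}_g\circ\nu$ has even order and the restriction of $\chi'$ to the cyclic group $\langle\alpha\rangle$ has positive scalar product with every real-valued irreducible character of $\langle\alpha\rangle$ (i.e. with the trivial character and with the linear character sending $\alpha$ to $-1$). Then the triple $(G,V,n)$ has the $E1$-property.
   Context: For $x\in N_{\mathrm{GL}(V)}(G)$, $\mathrm{ad}_x\in\mathrm{Aut}(G)$ denotes conjugation $y\mapsto xyx^{-1}$. Put $A=\langle G,n\rangle\le\mathrm{GL}(V)$, and $A'=A$ if $-\mathrm{id}_V\notin A$, $A'=A\cap\mathrm{SL}(V)$ if $-\mathrm{id}_V\in A$. The map $A\to G'$, $gn^i\mapsto\mathrm{ad}_g\circ\nu^i$ ($g\in G$, $i\in\mathbb{Z}$) is a surjective homomorphism restricting to an isomorphism $A'\to G'$; via the inverse of this isomorphism $V$ becomes an $\mathbb{R}G'$-module, and $\chi'$ denotes its character. The triple $(G,V,n)$ has the $E1$-property if there is $g\in G$ such that $gn$ has eigenvalue $1$. *)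

theory Defs
  imports "HOL-Analysis.Analysis"
begin

type_synonym 'n mat = "real ^ 'n ^ 'n"

text \<open>Matrix powers (the componentwise power on vec is NOT matrix power).\<close>
primrec mpow :: "'n::finite mat \<Rightarrow> nat \<Rightarrow> 'n mat" where
  "mpow x 0 = mat 1"
| "mpow x (Suc k) = x ** mpow x k"

definition finite_matrix_group :: "'n::finite mat set \<Rightarrow> bool" where
  "finite_matrix_group G \<longleftrightarrow> finite G \<and> G \<noteq> {} \<and> (\<forall>x\<in>G. invertible x) \<and> mat 1 \<in> G
     \<and> (\<forall>x\<in>G. \<forall>y\<in>G. x ** y \<in> G) \<and> (\<forall>x\<in>G. matrix_inv x \<in> G)"

definition irreducible_module :: "'n::finite mat set \<Rightarrow> bool" where
  "irreducible_module G \<longleftrightarrow>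
     (\<forall>W :: (real ^ 'n) set. subspace W \<and> (\<forall>g\<in>G. \<forall>w\<in>W. g *v w \<in> W) \<longrightarrow> W = {0} \<or> W = UNIV)"

definition trivial_module :: "'n::finite mat set \<Rightarrow> bool" where
  "trivial_module G \<longleftrightarrow> (\<forall>g\<in>G. \<forall>v. g *v v = v)"

definition ad :: "'n::finite mat \<Rightarrow> 'n mat \<Rightarrow> 'n mat" where
  "ad x y = x ** y ** matrix_inv x"

inductive_set gen_group :: "'n::finite mat set \<Rightarrow> 'n mat set" for S where
  one: "mat 1 \<in> gen_group S"
| gen: "x \<in> S \<Longrightarrow> x \<in> gen_group S"
| mult: "x \<in> gen_group S \<Longrightarrow> y \<in> gen_group S \<Longrightarrow> x ** y \<in> gen_group S"
| inv: "x \<in> gen_group S \<Longrightarrow> matrix_inv x \<in> gen_group S"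

definition grpA :: "'n::finite mat set \<Rightarrow> 'n mat \<Rightarrow> 'n mat set" where
  "grpA G n = gen_group (insert n G)"

definition grpA' :: "'n::finite mat set \<Rightarrow> 'n mat \<Rightarrow> 'n mat set" where
  "grpA' G n = (if - mat 1 \<in> grpA G n then {a \<in> grpA G n. det a = 1} else grpA G n)"

text \<open>The character \<chi>' of G': for \<sigma> \<in> G' (an automorphism of G, compared on G),
  \<chi>'(\<sigma>) is the trace of the unique a \<in> A' with ad_a = \<sigma> on G.\<close>
definition chi' :: "'n::finite mat set \<Rightarrow> 'n mat \<Rightarrow> ('n mat \<Rightarrow> 'n mat) \<Rightarrow> real" where
  "chi' G n \<sigma> = trace (THE a. a \<in> grpA' G n \<and> (\<forall>y\<in>G. ad a y = \<sigma> y))"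

definition aut_order :: "'n::finite mat set \<Rightarrow> ('n mat \<Rightarrow> 'n mat) \<Rightarrow> nat" where
  "aut_order G \<alpha> = (LEAST k. k > 0 \<and> (\<forall>y\<in>G. (\<alpha> ^^ k) y = y))"

definition E1_property :: "'n::finite mat set \<Rightarrow> 'n mat \<Rightarrow> bool" where
  "E1_property G n \<longleftrightarrow> (\<exists>g\<in>G. \<exists>v. v \<noteq> 0 \<and> (g ** n) *v v = v)"

end

theory Submission
  imports Defs
begin

text \<open>In odd dimension every real matrix has a real eigenvalue, so by Schur's lemma the
  centraliser of the irreducible group \<open>G\<close> consists of scalars. Hence an element of \<open>A'\<close> is
  determined by the automorphism of \<open>G\<close> it induces: \<open>\<alpha> = ad\<^sub>g \<circ> \<nu>\<close> is induced by
  \<open>x = \<plusminus>g n \<in> A'\<close>, \<open>x\<^sup>m = 1\<close> for the order \<open>m\<close> of \<open>\<alpha>\<close>, and \<open>\<chi>'(\<alpha>\<^sup>k) = tr x\<^sup>k\<close>. The two scalar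
  products are the traces of \<open>1/m \<Sum> x\<^sup>k\<close> and \<open>1/m \<Sum> (-1)\<^sup>k x\<^sup>k\<close>, the projections onto the
  \<open>1\<close>- and \<open>-1\<close>-eigenspaces of \<open>x\<close>. Both being nonzero, \<open>x\<close> has both eigenvalues, so \<open>g n\<close> has
  eigenvalue \<open>1\<close> whatever the sign.\<close>

lemma matrix_inv_right_left:
  assumes "invertible (A :: 'a::semiring_1 ^ 'n ^ 'n)"
  shows matrix_inv_right: "A ** matrix_inv A = mat 1"
    and matrix_inv_left: "matrix_inv A ** A = mat 1"
proof -
  have "\<exists>A'. A ** A' = mat 1 \<and> A' ** A = mat 1"
    using assms unfolding invertible_def by blast
  then have "A ** matrix_inv A = mat 1 \<and> matrix_inv A ** A = mat 1"
    unfolding matrix_inv_def by (rule someI_ex)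
  then show "A ** matrix_inv A = mat 1" "matrix_inv A ** A = mat 1" by auto
qed

lemma matrix_inv_cancel_left:
  "invertible (A :: 'a::semiring_1 ^ 'n ^ 'n) \<Longrightarrow> matrix_inv A ** (A ** B) = B"
  by (simp add: matrix_mul_assoc matrix_inv_left)

lemma matrix_inv_unique:
  assumes "invertible (A :: 'a::semiring_1 ^ 'n ^ 'n)" and "A ** B = mat 1"
  shows "matrix_inv A = B"
proof -
  have "matrix_inv A = matrix_inv A ** (A ** B)" using assms by simp
  also have "\<dots> = B" by (simp add: matrix_mul_assoc matrix_inv_left[OF assms(1)])
  finally show ?thesis .
qed

lemma invertible_matrix_inv:
  "invertible (A :: 'a::semiring_1 ^ 'n ^ 'n) \<Longrightarrow> invertible (matrix_inv A)"
  using matrix_inv_right matrix_inv_left unfolding invertible_def by blast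

lemma invertible_mat_1: "invertible (mat 1 :: 'a::semiring_1 ^ 'n ^ 'n)"
  unfolding invertible_def by (rule exI[of _ "mat 1"]) simp

lemma matrix_inv_mat_1: "matrix_inv (mat 1 :: 'a::semiring_1 ^ 'n ^ 'n) = mat 1"
  by (rule matrix_inv_unique[OF invertible_mat_1]) simp

lemma matrix_inv_mult:
  assumes "invertible (A :: 'a::semiring_1 ^ 'n ^ 'n)" and "invertible (B :: 'a ^ 'n ^ 'n)"
  shows "matrix_inv (A ** B) = matrix_inv B ** matrix_inv A"
proof (rule matrix_inv_unique)
  show "invertible (A ** B)" using assms by (rule invertible_mult)
  have "A ** B ** (matrix_inv B ** matrix_inv A) = A ** (B ** matrix_inv B) ** matrix_inv A"
    by (simp add: matrix_mul_assoc)
  then show "A ** B ** (matrix_inv B ** matrix_inv A) = mat 1"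
    using assms by (simp add: matrix_inv_right)
qed

lemma matrix_mult_uminus_left: "(- A) ** (B :: 'a::ring_1 ^ 'n ^ 'm) = - (A ** B)"
  by (simp add: matrix_matrix_mult_def vec_eq_iff sum_negf)

lemma matrix_mult_uminus_right: "A ** (- B :: 'a::ring_1 ^ 'n ^ 'm) = - (A ** B)"
  by (simp add: matrix_matrix_mult_def vec_eq_iff sum_negf)

lemma matrix_vector_mult_uminus_left: "(- A) *v (x :: 'a::ring_1 ^ 'n) = - (A *v x)"
  by (simp add: matrix_vector_mult_def vec_eq_iff sum_negf)

lemma invertible_uminus: "invertible (A :: 'a::ring_1 ^ 'n ^ 'n) \<Longrightarrow> invertible (- A)"
  unfolding invertible_def by (metis matrix_mult_uminus_left matrix_mult_uminus_right minus_minus)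

lemma matrix_inv_uminus:
  assumes "invertible (A :: 'a::ring_1 ^ 'n ^ 'n)"
  shows "matrix_inv (- A) = - matrix_inv A"
  by (rule matrix_inv_unique)
    (simp_all add: assms invertible_uminus matrix_mult_uminus_left matrix_mult_uminus_right
      matrix_inv_right)

lemma det_matrix_inv:
  assumes "invertible (A :: 'a::field ^ 'n ^ 'n)"
  shows "det (matrix_inv A) = inverse (det A)"
  using det_mul[of A "matrix_inv A"] by (simp add: matrix_inv_right assms inverse_unique)

lemma det_scaleR: "det (t *\<^sub>R (A :: real ^ 'n ^ 'n)) = t ^ CARD('n) * det A"
proof -
  have "t *\<^sub>R A = (t *\<^sub>R mat 1) ** A" by (simp add: scalar_matrix_assoc[symmetric])
  moreover have "det (t *\<^sub>R mat 1 :: real ^ 'n ^ 'n) = t ^ CARD('n)"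
    by (subst det_diagonal) (auto simp: mat_def)
  ultimately show ?thesis by (simp add: det_mul)
qed

lemma matrix_mult_sum: "A ** sum f S = (\<Sum>k\<in>S. A ** (f k :: 'a::semiring_1 ^ 'n ^ 'm))"
  by (induction S rule: infinite_finite_induct) (simp_all add: matrix_add_ldistrib)

lemma trace_sum: "trace (sum f S) = (\<Sum>k\<in>S. trace (f k :: 'a::comm_semiring_1 ^ 'n ^ 'n))"
  unfolding trace_def by (simp add: sum.swap[of _ S])

lemma trace_scaleR: "trace (r *\<^sub>R (A :: real ^ 'n ^ 'n)) = r * trace A"
  unfolding trace_def by (simp add: sum_distrib_left)

lemma invertible_mpow: "invertible (x :: 'n::finite mat) \<Longrightarrow> invertible (mpow x k)"
  by (induction k) (auto intro: invertible_mult simp: invertible_mat_1)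

lemma det_mpow: "det (mpow (x :: 'n::finite mat) k) = det x ^ k"
  by (induction k) (auto simp: det_mul)

lemma ad_ad:
  assumes "invertible a" and "invertible (b :: 'n::finite mat)"
  shows "ad a (ad b y) = ad (a ** b) y"
  unfolding ad_def using matrix_inv_mult[OF assms] by (simp add: matrix_mul_assoc)

lemma ad_mat_1: "ad (mat 1 :: 'n::finite mat) = id"
  by (auto simp: ad_def matrix_inv_mat_1)

lemma ad_uminus: "invertible (a :: 'n::finite mat) \<Longrightarrow> ad (- a) = ad a"
  by (auto simp: ad_def matrix_inv_uminus matrix_mult_uminus_left matrix_mult_uminus_right)

lemma inj_ad:
  assumes "invertible (a :: 'n::finite mat)"
  shows "inj (ad a)"
proof (rule inj_on_inverseI)
  fix y :: "'n mat"
  show "matrix_inv a ** ad a y ** a = y" unfolding ad_def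
    by (simp add: matrix_mul_assoc matrix_inv_left[OF assms])
      (simp add: matrix_mul_assoc[symmetric] matrix_inv_left[OF assms])
qed

lemma funpow_ad: "invertible (x :: 'n::finite mat) \<Longrightarrow> ad x ^^ k = ad (mpow x k)"
  by (induction k) (auto simp: ad_mat_1 fun_eq_iff ad_ad invertible_mpow)

lemma funpow_periodic_on_finite:
  assumes "inj f" and "finite S" and "f ` S \<subseteq> S"
  shows "\<exists>k>0. \<forall>x\<in>S. (f ^^ k) x = x"
proof -
  have "\<exists>p>0. (f ^^ p) x = x" if "x \<in> S" for x
  proof -
    have "(f ^^ k) x \<in> S" for k using that assms(3) by (induction k) auto
    then have "finite {y. \<exists>k. y = (f ^^ k) x}" using assms(2) by (auto intro: finite_subset)
    then show ?thesis using funpow_inj_finite[OF assms(1)] by blast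
  qed
  then obtain p where p: "\<And>x. x \<in> S \<Longrightarrow> p x > 0 \<and> (f ^^ p x) x = x" by metis
  have "(f ^^ prod p S) x = x" if "x \<in> S" for x
  proof -
    have "prod p S mod p x = 0" using that assms(2) by (simp add: dvd_prodI)
    then show ?thesis
      using funpow_mod_eq[where f = f and n = "p x" and x = x and m = "prod p S"] p[OF that] by simp
  qed
  moreover have "prod p S > 0" using p by (simp add: prod_pos)
  ultimately show ?thesis by blast
qed

lemma aut_order_period:
  assumes "inj \<alpha>" and "finite G" and "\<alpha> ` G \<subseteq> G"
  shows "aut_order G \<alpha> > 0" and "\<forall>y\<in>G. (\<alpha> ^^ aut_order G \<alpha>) y = y"
  using LeastI_ex[OF funpow_periodic_on_finite[OF assms]] unfolding aut_order_def by auto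

lemma finite_matrix_group_mpow_eq_1:
  assumes "finite_matrix_group G" and "g \<in> G"
  obtains k where "k > 0" and "mpow g k = mat 1"
proof -
  have G: "finite G" "mat 1 \<in> G" "invertible g" "\<And>y. y \<in> G \<Longrightarrow> g ** y \<in> G"
    using assms unfolding finite_matrix_group_def by auto
  have "inj ((**) g)"
    by (rule inj_on_inverseI[of _ "(**) (matrix_inv g)"])
      (simp add: matrix_mul_assoc matrix_inv_left[OF G(3)])
  then obtain k where "k > 0" and "\<forall>y\<in>G. ((**) g ^^ k) y = y"
    using funpow_periodic_on_finite[of "(**) g" G] G by blast
  moreover have "((**) g ^^ k) (mat 1) = mpow g k"
    by (induction k) simp_all
  ultimately show ?thesis using that G(2) by metis
qed

lemma ad_normalizer_image:
  assumes "finite_matrix_group G" and "g \<in> G" and "ad n ` G = G"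
  shows "(ad g \<circ> ad n) ` G \<subseteq> G"
proof -
  have "ad g y \<in> G" if "y \<in> G" for y
    using assms(1,2) that unfolding finite_matrix_group_def ad_def by blast
  then show ?thesis using assms(3) by auto
qed

lemma abs_det_eq_1_if_mpow_eq_1:
  assumes "k > 0" and "mpow (x :: 'n::finite mat) k = mat 1"
  shows "\<bar>det x\<bar> = 1"
  using power_eq_1_iff[of "det x" k] arg_cong[OF assms(2), of det] assms(1)
  by (simp add: det_mpow)

lemma det_eq_0_imp_kernel:
  assumes "det (A :: real ^ 'n ^ 'n) = 0"
  obtains v where "v \<noteq> 0" and "A *v v = 0"
proof -
  have "\<not> (\<exists>B. B ** A = mat 1)"
    using assms invertible_det_nz invertible_left_inverse by blast
  then show ?thesis using that matrix_left_invertible_ker by blast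
qed

text \<open>In odd dimension the characteristic polynomial \<open>det (t I - c)\<close> changes sign, since it
  behaves like \<open>t ^ CARD('n)\<close> for large \<open>|t|\<close>; the intermediate value theorem gives a root.\<close>

lemma odd_dim_real_eigenvector:
  assumes "odd CARD('n)"
  obtains l v where "v \<noteq> 0" and "(c :: 'n::finite mat) *v v = l *\<^sub>R v"
proof -
  define p where "p t = det (t *\<^sub>R mat 1 - c)" for t
  define q where "q s = det (mat 1 - s *\<^sub>R c)" for s
  have p_q: "p t = t ^ CARD('n) * q (1 / t)" if "t \<noteq> 0" for t
  proof -
    have "t *\<^sub>R mat 1 - c = t *\<^sub>R (mat 1 - (1 / t) *\<^sub>R c)"
      using that by (simp add: algebra_simps)
    then show ?thesis unfolding p_def q_def by (simp add: det_scaleR)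
  qed
  have "continuous_on UNIV q" unfolding q_def det_def by (intro continuous_intros)
  then have "(q \<longlongrightarrow> q 0) (at 0)" by (simp add: continuous_on_def)
  moreover have "q 0 = 1" by (simp add: q_def)
  ultimately have "\<forall>\<^sub>F s in at 0. q s > 0" using order_tendstoD(1) by fastforce
  then obtain d where "d > 0" and d: "\<And>s. s \<noteq> 0 \<Longrightarrow> \<bar>s\<bar> < d \<Longrightarrow> q s > 0"
    unfolding eventually_at by (auto simp: dist_real_def)
  define t where "t = 2 / d"
  have "t > 0" and "q (1 / t) > 0" and "q (1 / - t) > 0"
    using \<open>d > 0\<close> by (auto simp: t_def intro!: d)
  moreover have "(- t) ^ CARD('n) < 0" using assms \<open>t > 0\<close> by (simp add: power_odd_eq)
  ultimately have "p (- t) < 0" and "p t > 0" by (simp_all add: p_q mult_neg_pos)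
  moreover have "continuous_on {- t..t} p" unfolding p_def det_def by (intro continuous_intros)
  ultimately obtain l where "p l = 0" using IVT'[of p "- t" 0 t] \<open>t > 0\<close> by force
  then obtain v where "v \<noteq> 0" and "(l *\<^sub>R mat 1 - c) *v v = 0"
    unfolding p_def by (rule det_eq_0_imp_kernel)
  moreover from this(2) have "c *v v = l *\<^sub>R v"
    by (simp add: matrix_vector_mult_diff_rdistrib flip: scaleR_matrix_vector_assoc)
  ultimately show ?thesis using that by blast
qed

lemma schur_scalar:
  assumes "odd CARD('n)" and "irreducible_module G"
    and "\<And>y. y \<in> G \<Longrightarrow> y ** c = c ** y"
  obtains l where "(c :: 'n::finite mat) = l *\<^sub>R mat 1"
proof -
  obtain l v where "v \<noteq> 0" and "c *v v = l *\<^sub>R v"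
    using odd_dim_real_eigenvector[OF assms(1)] .
  define W where "W = {w. c *v w = l *\<^sub>R w}"
  have "subspace W" unfolding W_def subspace_def
    by (auto simp: matrix_vector_right_distrib matrix_vector_mult_scaleR algebra_simps)
  moreover have "g *v w \<in> W" if "g \<in> G" and "w \<in> W" for g w
  proof -
    have "c *v (g *v w) = g *v (c *v w)"
      using assms(3)[OF \<open>g \<in> G\<close>] by (simp add: matrix_vector_mul_assoc)
    then show ?thesis using \<open>w \<in> W\<close> unfolding W_def by (simp add: matrix_vector_mult_scaleR)
  qed
  ultimately have "W = {0} \<or> W = UNIV" using assms(2) unfolding irreducible_module_def by blast
  moreover have "v \<in> W" using \<open>c *v v = l *\<^sub>R v\<close> by (simp add: W_def)
  ultimately have "W = UNIV" using \<open>v \<noteq> 0\<close> by auto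
  then have "c = l *\<^sub>R mat 1"
    unfolding W_def matrix_eq by (auto simp flip: scaleR_matrix_vector_assoc)
  then show ?thesis by (rule that)
qed

lemma gen_group_invertible_abs_det:
  assumes "\<And>s. s \<in> S \<Longrightarrow> invertible s \<and> \<bar>det s\<bar> = 1"
    and "(x :: 'n::finite mat) \<in> gen_group S"
  shows "invertible x \<and> \<bar>det x\<bar> = 1"
  using assms(2)
  by induction
    (auto simp: assms(1) invertible_mat_1 invertible_mult invertible_matrix_inv det_mul abs_mult
      det_matrix_inv)

lemma grpA_invertible_abs_det:
  assumes "finite_matrix_group G" and "invertible n" and "\<bar>det n\<bar> = 1"
    and "(a :: 'n::finite mat) \<in> grpA G n"
  shows "invertible a \<and> \<bar>det a\<bar> = 1"
proof -
  have "\<bar>det g\<bar> = 1" if "g \<in> G" for g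
    using finite_matrix_group_mpow_eq_1[OF assms(1) that] abs_det_eq_1_if_mpow_eq_1 by metis
  then show ?thesis using assms gen_group_invertible_abs_det
    unfolding grpA_def finite_matrix_group_def by (metis insert_iff)
qed

lemma grpA'_subset_grpA: "grpA' G n \<subseteq> grpA G n"
  unfolding grpA'_def by auto

lemma mat_1_in_grpA': "mat 1 \<in> grpA' G n"
  unfolding grpA'_def grpA_def by (auto intro: gen_group.one)

lemma grpA'_mult: "a \<in> grpA' G n \<Longrightarrow> b \<in> grpA' G n \<Longrightarrow> a ** b \<in> grpA' G n"
  unfolding grpA'_def grpA_def by (auto intro: gen_group.mult simp: det_mul)

lemma mpow_in_grpA': "a \<in> grpA' G n \<Longrightarrow> mpow a k \<in> grpA' G n"
  by (induction k) (simp_all add: mat_1_in_grpA' grpA'_mult)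

text \<open>By Schur's lemma two elements of \<open>A\<close> inducing the same automorphism of \<open>G\<close> differ by a
  scalar of absolute determinant 1, i.e. by \<open>\<plusminus>1\<close>; in odd dimension \<open>-1\<close> has determinant \<open>-1\<close>,
  which is exactly what passing to \<open>A'\<close> excludes.\<close>

lemma grpA'_ad_unique:
  assumes "odd CARD('n)" and "irreducible_module G"
    and A: "\<And>a. a \<in> grpA G n \<Longrightarrow> invertible a \<and> \<bar>det a\<bar> = 1"
    and "a \<in> grpA' G n" and "b \<in> grpA' G n" and "\<forall>y\<in>G. ad a y = ad b y"
  shows "a = (b :: 'n::finite mat)"
proof -
  have "a \<in> grpA G n" and "b \<in> grpA G n" using assms(4,5) grpA'_subset_grpA by auto
  then have "invertible a" and "invertible b" using A by auto
  define c where "c = matrix_inv b ** a"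
  have c_A: "c \<in> grpA G n"
    using \<open>a \<in> grpA G n\<close> \<open>b \<in> grpA G n\<close> unfolding c_def grpA_def
    by (intro gen_group.mult gen_group.inv)
  have "y ** c = c ** y" if "y \<in> G" for y
  proof -
    have "c ** y = matrix_inv b ** ad a y ** a"
      by (simp add: c_def ad_def matrix_mul_assoc[symmetric]
          matrix_inv_left[OF \<open>invertible a\<close>])
    also have "\<dots> = matrix_inv b ** ad b y ** a" using assms(6) that by simp
    also have "\<dots> = y ** c"
      by (simp add: c_def ad_def matrix_mul_assoc[symmetric]
          matrix_inv_cancel_left[OF \<open>invertible b\<close>])
    finally show ?thesis by simp
  qed
  then obtain l where l: "c = l *\<^sub>R mat 1" using schur_scalar[OF assms(1,2)] by blast
  have "\<bar>l\<bar> ^ CARD('n) = 1" using A[OF c_A] by (simp add: l det_scaleR power_abs)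
  then have "\<bar>l\<bar> = 1" using power_eq_1_iff[of "\<bar>l\<bar>" "CARD('n)"] by simp
  then have "l = 1 \<or> l = -1" by auto
  moreover have "l \<noteq> -1"
  proof
    assume "l = -1"
    then have "- mat 1 \<in> grpA G n" and "det c = -1"
      using c_A assms(1) det_scaleR[of "-1" "mat 1 :: 'n mat"] by (simp_all add: l)
    moreover from this(1) have "det a = 1" and "det b = 1"
      using assms(4,5) unfolding grpA'_def by auto
    ultimately show False
      by (simp add: c_def det_mul det_matrix_inv \<open>invertible b\<close>)
  qed
  ultimately have "matrix_inv b ** a = mat 1" using l by (simp add: c_def)
  then show ?thesis
    by (metis matrix_inv_right[OF \<open>invertible b\<close>] matrix_mul_assoc matrix_mul_lid matrix_mul_rid)
qed

lemma chi'_ad: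
  assumes "odd CARD('n)" and "irreducible_module G"
    and "\<And>a. a \<in> grpA G n \<Longrightarrow> invertible a \<and> \<bar>det a\<bar> = 1"
    and "(a :: 'n::finite mat) \<in> grpA' G n"
  shows "chi' G n (ad a) = trace a"
proof -
  have "(THE b. b \<in> grpA' G n \<and> (\<forall>y\<in>G. ad b y = ad a y)) = a"
    using grpA'_ad_unique[OF assms(1-3) _ assms(4)] assms(4) by (intro the_equality) auto
  then show ?thesis unfolding chi'_def by simp
qed

lemma grpA'_sign_representative:
  assumes "odd CARD('n)" and "(h :: 'n::finite mat) \<in> grpA G n" and "\<bar>det h\<bar> = 1"
  obtains x where "x \<in> grpA' G n" and "x = h \<or> x = - h"
proof (cases "- mat 1 \<in> grpA G n \<and> det h = -1")
  case True
  then have "- h \<in> grpA G n"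
    using assms(2) gen_group.mult[of "- mat 1" "insert n G" h]
    by (simp add: grpA_def matrix_mult_uminus_left)
  moreover have "det (- h) = 1"
    using det_scaleR[of "-1" h] True assms(1) by simp
  ultimately show ?thesis using that True unfolding grpA'_def by auto
next
  case False
  then have "h \<in> grpA' G n" using assms(2,3) unfolding grpA'_def by auto
  then show ?thesis using that by blast
qed

lemma aut_order_ad_grpA':
  assumes "odd CARD('n)" and "irreducible_module G"
    and A: "\<And>a. a \<in> grpA G n \<Longrightarrow> invertible a \<and> \<bar>det a\<bar> = 1"
    and "finite G" and "(x :: 'n::finite mat) \<in> grpA' G n" and "ad x ` G \<subseteq> G"
  shows "aut_order G (ad x) > 0" and "mpow x (aut_order G (ad x)) = mat 1"
proof -
  have "invertible x" using A assms(5) grpA'_subset_grpA by auto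
  note order = aut_order_period[OF inj_ad[OF this] assms(4,6)]
  show "aut_order G (ad x) > 0" by (rule order(1))
  show "mpow x (aut_order G (ad x)) = mat 1"
  proof (rule grpA'_ad_unique[OF assms(1-3)])
    show "mpow x (aut_order G (ad x)) \<in> grpA' G n" by (rule mpow_in_grpA'[OF assms(5)])
    show "mat 1 \<in> grpA' G n" by (rule mat_1_in_grpA')
    show "\<forall>y\<in>G. ad (mpow x (aut_order G (ad x))) y = ad (mat 1) y"
      using order(2) by (simp add: funpow_ad[OF \<open>invertible x\<close>] ad_mat_1)
  qed
qed

text \<open>The twisted average \<open>Q = \<Sum>k<m. c ^ k x ^ k\<close> satisfies \<open>c x Q = Q\<close>, so every nonzero
  column of \<open>Q\<close> is an eigenvector of \<open>x\<close>.\<close>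

lemma eigenvector_of_twisted_average:
  assumes "c ^ m = 1" and "mpow (x :: 'n::finite mat) m = mat 1"
    and "trace (\<Sum>k<m. c ^ k *\<^sub>R mpow x k) \<noteq> 0"
  obtains v where "v \<noteq> 0" and "c *\<^sub>R (x *v v) = v"
proof -
  define Q where "Q = (\<Sum>k<m. c ^ k *\<^sub>R mpow x k)"
  have "c *\<^sub>R (x ** Q) = (\<Sum>k<m. c ^ Suc k *\<^sub>R mpow x (Suc k))"
    by (simp add: Q_def matrix_mult_sum scaleR_sum_right matrix_scalar_ac flip: scalar_matrix_assoc)
  also have "\<dots> = Q"
    using sum.lessThan_Suc_shift[of "\<lambda>k. c ^ k *\<^sub>R mpow x k" m]
      sum.lessThan_Suc[of "\<lambda>k. c ^ k *\<^sub>R mpow x k" m] assms(1,2)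
    by (simp add: Q_def add.commute)
  finally have Q: "c *\<^sub>R (x ** Q) = Q" .
  have "Q \<noteq> 0" using assms(3) by (auto simp: Q_def[symmetric] trace_def)
  then obtain u where "Q *v u \<noteq> 0" using matrix_eq[of Q 0] by auto
  moreover have "c *\<^sub>R (x *v (Q *v u)) = Q *v u"
    using arg_cong[OF Q, of "\<lambda>M. M *v u"]
    by (simp add: matrix_vector_mul_assoc scaleR_matrix_vector_assoc)
  ultimately show ?thesis by (rule that)
qed

lemma twisted_averages_eigenvectors:
  assumes "mpow (x :: 'n::finite mat) m = mat 1" and "even m"
    and "(\<Sum>k<m. trace (mpow x k)) > 0" and "(\<Sum>k<m. trace (mpow x k) * (-1) ^ k) > 0"
  obtains v w where "v \<noteq> 0" and "x *v v = v" and "w \<noteq> 0" and "x *v w = - w"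
proof -
  have tr_1: "trace (\<Sum>k<m. 1 ^ k *\<^sub>R mpow x k) \<noteq> 0"
    and tr_minus_1: "trace (\<Sum>k<m. (-1) ^ k *\<^sub>R mpow x k) \<noteq> 0"
    using assms(3,4) by (simp_all add: trace_sum trace_scaleR mult.commute)
  have "(-1 :: real) ^ m = 1" using assms(2) by simp
  obtain v where "v \<noteq> 0" and "1 *\<^sub>R (x *v v) = v"
    using eigenvector_of_twisted_average[OF power_one assms(1) tr_1] .
  moreover obtain w where "w \<noteq> 0" and "(-1) *\<^sub>R (x *v w) = w"
    using eigenvector_of_twisted_average[OF \<open>(-1) ^ m = 1\<close> assms(1) tr_minus_1] .
  ultimately show ?thesis using that by (metis minus_minus scaleR_minus1_left scaleR_one)
qed

lemma eigenvalue_1_of_sign_representative: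
  assumes "x = h \<or> x = - h"
    and "v \<noteq> 0" and "x *v v = v" and "w \<noteq> 0" and "x *v w = - w"
  shows "\<exists>u. u \<noteq> 0 \<and> (h :: 'n::finite mat) *v u = u"
  using assms by (auto simp: matrix_vector_mult_uminus_left)

theorem proposition2:
  fixes G :: "'n::finite mat set" and n :: "'n mat"
  assumes "odd CARD('n)"
    and "finite_matrix_group G"
    and "irreducible_module G" and "\<not> trivial_module G"
    and "- mat 1 \<notin> G"
    and "invertible n" and "(\<lambda>y. ad n y) ` G = G"
    and "\<exists>k>0. mpow n k = mat 1"
    and "\<exists>g\<in>G. (let \<alpha> = ad g \<circ> ad n; m = aut_order G \<alpha> in
           even m
           \<and> (1 / real m) * (\<Sum>k<m. chi' G n (\<alpha> ^^ k)) > 0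
           \<and> (1 / real m) * (\<Sum>k<m. chi' G n (\<alpha> ^^ k) * (-1) ^ k) > 0)"
  shows "E1_property G n"
proof -
  have A: "\<And>a. a \<in> grpA G n \<Longrightarrow> invertible a \<and> \<bar>det a\<bar> = 1"
    using grpA_invertible_abs_det[OF assms(2,6)] abs_det_eq_1_if_mpow_eq_1 assms(8) by blast
  obtain g where "g \<in> G" and hyp: "let \<alpha> = ad g \<circ> ad n; m = aut_order G \<alpha> in
           even m
           \<and> (1 / real m) * (\<Sum>k<m. chi' G n (\<alpha> ^^ k)) > 0
           \<and> (1 / real m) * (\<Sum>k<m. chi' G n (\<alpha> ^^ k) * (-1) ^ k) > 0"
    using assms(9) by blast
  have "g ** n \<in> grpA G n"
    unfolding grpA_def using \<open>g \<in> G\<close> by (intro gen_group.mult gen_group.gen) auto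
  then obtain x where x: "x \<in> grpA' G n" and x_gn: "x = g ** n \<or> x = - (g ** n)"
    using grpA'_sign_representative[OF assms(1)] A by blast
  have "invertible x" and "invertible g"
    using A x grpA'_subset_grpA \<open>g \<in> G\<close> assms(2) by (auto simp: finite_matrix_group_def)
  then have \<alpha>: "ad g \<circ> ad n = ad x"
    using x_gn assms(6) by (auto simp: fun_eq_iff ad_ad ad_uminus invertible_mult)
  define m where "m = aut_order G (ad x)"
  have "ad x ` G \<subseteq> G"
    unfolding \<alpha>[symmetric] by (rule ad_normalizer_image[OF assms(2) \<open>g \<in> G\<close> assms(7)])
  then have "m > 0" and "mpow x m = mat 1"
    using aut_order_ad_grpA'[OF assms(1,3) A _ x] assms(2)
    by (simp_all add: m_def finite_matrix_group_def)
  moreover have "chi' G n (ad x ^^ k) = trace (mpow x k)" for k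
    using chi'_ad[OF assms(1,3) A mpow_in_grpA'[OF x]]
    by (simp add: funpow_ad[OF \<open>invertible x\<close>])
  ultimately obtain v w where "v \<noteq> 0" "x *v v = v" "w \<noteq> 0" "x *v w = - w"
    using hyp twisted_averages_eigenvectors[of x m]
    unfolding \<alpha> Let_def m_def[symmetric] by (auto simp: zero_less_divide_iff)
  then show ?thesis
    using eigenvalue_1_of_sign_representative[OF x_gn] \<open>g \<in> G\<close>
    unfolding E1_property_def by blast
qed

end
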